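(* Let $t_0>0$, $D\ge0$, $\alpha_1,\alpha_2\in\mathbb{R}$ and $i\in\mathbb{Z}^+$ with $\alpha_1\le\alpha_2-1$ and $\alpha_2-\alpha_1\le i$. Let $F:\{-1,\dots,i\}\times[\alpha_1-1,\alpha_2]\times[t_0,\infty)\to[0,\infty)$ be such that $F(j,\alpha,t)$ is Lebesgue measurable in $t$ for each $\alpha,j$. Let $\gamma\ge0$. Assume: (1) (monotonicity) for all $j,j_1,j_2\in\{-1,\dots,i\}$ with $j_1\le j_2$, all $\beta,\beta_1,\beta_2\in[\alpha_1,\alpha_2]$ with $\beta_1\le\beta_2$, and all $t\ge t_0$: $F(j_1,\beta,t)\lesssim F(j_2,\beta,t)$ and $F(j,\beta_1,t)\lesssim F(j,\beta_2,t)$; (2) (interpolation) for all $j\in\{-1,\dots,i\}$, all $\alpha,\beta_1,\beta_2\in[\alpha_1,\alpha_2]$ with $\beta_1\le\alpha\le\beta_2$, and all $t\ge t_0$: $F(j,\alpha,t)\lesssim F(j,\beta_1,t)^{\frac{\beta_2-\alpha}{\beta_2-\beta_1}}F(j,\beta_2,t)^{\frac{\alpha-\beta_1}{\beta_2-\beta_1}}$; (3) (energy and Morawetz estimate) for all $j\in\{0,\dots,i\}$, $\alpha\in[\alpha_1,\alpha_2]$ and $t_2\ge t_1\ge t_0$: $F(j,\alpha,t_2)+\int_{t_1}^{t_2}F(j-1,\alpha-1,t)\,dt\lesssim F(j,\alpha,t_1)+Dt_1^{\alpha-\alpha_2-\gamma}$; (4) (initial decay rate) if $\gamma>0$, then for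 all $t\ge t_0$: $F(i,\alpha_2,t)\lesssim t^{-\gamma}(F(i,\alpha_2,t_0)+D)$. Then for all $j\in\{0,\dots,i\}$, all $\alpha\in[\max\{\alpha_1,\alpha_2-j\},\alpha_2]$ and all $t\ge t_0$, $$F(i-j,\alpha,t)\lesssim t^{\alpha-\alpha_2-\gamma}(F(i,\alpha_2,t_0)+D),$$ where the implicit constant may depend on $\alpha_1$ and $\alpha_2$.
   Context: $A\lesssim B$ means $A\le CB$ for a constant $C$ independent of $t,t_1,t_2$ and $D$. In the paper $t_0=10M>0$. *)

theory Defs
  imports "HOL-Analysis.Analysis"
begin

end

theory Submission
  imports Defs
begin

(* Say that level (j, \<beta>) decays with constant A if
   F(j, \<beta>, t) \<le> A t^(\<beta> - \<alpha>2 - \<gamma>) (F(i, \<alpha>2, t0) + D) for all t \<ge> t0.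
   The top level (i, \<alpha>2) decays by hypothesis (4), or by the energy estimate when \<gamma> = 0.
   Decay of (j, \<beta>) passes to (j - 1, \<beta> - 1): the energy estimate on [\<tau>/2, \<tau>] bounds the
   integral of F(j - 1, \<beta> - 1) by O(\<tau>^(\<beta> - \<alpha>2 - \<gamma>)), so at some s in that interval
   F(j - 1, \<beta> - 1, s) = O(\<tau>^(\<beta> - 1 - \<alpha>2 - \<gamma>)), and the energy estimate from s to \<tau>
   carries this bound to time \<tau>. Iterating reaches the levels (i - n, \<alpha>2 - n); other weights
   follow by interpolation between neighbouring levels and lower indices by monotonicity in j.
   If \<alpha>1 is not of the form \<alpha>2 - n, the weight \<alpha>1 is reached by interpolating at \<alpha>1 + 1
   and taking one more step. *)

lemma nn_integral_le_imp_le_twice_average: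
  fixes f :: "real \<Rightarrow> real"
  assumes ab: "a < b" and M: "M > 0"
    and int_le: "(\<integral>\<^sup>+ s\<in>{a..b}. ennreal (f s) \<partial>lebesgue) \<le> ennreal M"
  shows "\<exists>s\<in>{a..b}. f s \<le> 2 * M / (b - a)"
proof (rule ccontr)
  \<comment> \<open>The factor 2 makes the contradiction strict without any measurability of f.\<close>
  assume "\<not> ?thesis"
  then have "\<And>s. s \<in> {a..b} \<Longrightarrow> 2 * M / (b - a) \<le> f s"
    by force
  then have "(\<integral>\<^sup>+ s. ennreal (2 * M / (b - a)) * indicator {a..b} s \<partial>lebesgue)
      \<le> (\<integral>\<^sup>+ s\<in>{a..b}. ennreal (f s) \<partial>lebesgue)"
    by (intro nn_integral_mono) (auto simp: indicator_def intro!: ennreal_leI)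
  also have "(\<integral>\<^sup>+ s. ennreal (2 * M / (b - a)) * indicator {a..b} s \<partial>lebesgue) = ennreal (2 * M)"
    using ab M by (simp add: nn_integral_cmult_indicator ennreal_mult''[symmetric])
  finally have "ennreal (2 * M) \<le> ennreal M"
    using int_le by (rule order.trans)
  with M show False
    by simp
qed

lemma divide_powr_eq: "0 < x \<Longrightarrow> 0 < c \<Longrightarrow> (x / c) powr p = c powr (- p) * (x::real) powr p"
  by (simp add: powr_divide powr_minus field_simps)

lemma powr_geometric_mean_mult:
  fixes c t :: real
  assumes "0 \<le> c" "0 < t" "\<theta>1 + \<theta>2 = 1"
  shows "(c * t powr e1) powr \<theta>1 * (c * t powr e2) powr \<theta>2 = c * t powr (e1 * \<theta>1 + e2 * \<theta>2)"
proof (cases "c = 0")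
  case False
  with assms have "c powr \<theta>1 * c powr \<theta>2 = c" by (simp add: powr_add[symmetric])
  with assms False show ?thesis by (simp add: powr_mult powr_powr powr_add mult_ac)
qed simp

lemma interpolation_exponent_eq:
  fixes a \<beta>1 \<beta>2 s :: real
  assumes "\<beta>1 < \<beta>2"
  shows "(\<beta>1 - s) * ((\<beta>2 - a) / (\<beta>2 - \<beta>1)) + (\<beta>2 - s) * ((a - \<beta>1) / (\<beta>2 - \<beta>1)) = a - s"
proof -
  have "(\<beta>1 - s) * ((\<beta>2 - a) / (\<beta>2 - \<beta>1)) + (\<beta>2 - s) * ((a - \<beta>1) / (\<beta>2 - \<beta>1))
      = ((\<beta>1 - s) * (\<beta>2 - a) + (\<beta>2 - s) * (a - \<beta>1)) / (\<beta>2 - \<beta>1)"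
    by (simp add: add_divide_distrib)
  also have "(\<beta>1 - s) * (\<beta>2 - a) + (\<beta>2 - s) * (a - \<beta>1) = (a - s) * (\<beta>2 - \<beta>1)"
    by algebra
  finally show ?thesis
    using assms by simp
qed

(* The first summand bounds the averaging argument for \<tau> \<ge> 2 t0, the second the energy
   estimate from t0 for \<tau> \<le> 2 t0; here e = \<beta> - \<alpha>2 - \<gamma> and A is the constant at (j, \<beta>). *)
definition step_const :: "real \<Rightarrow> real \<Rightarrow> real \<Rightarrow> real \<Rightarrow> real" where
  "step_const C t0 e A =
     C * (2 * C * (A + 1) + 1) * 2 powr (1 - e) + C * (C * C + t0 powr (e - 1)) * (2 * t0) powr (1 - e)"

fun level_const :: "real \<Rightarrow> real \<Rightarrow> real \<Rightarrow> nat \<Rightarrow> real" where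
  "level_const C t0 \<gamma> 0 = C"
| "level_const C t0 \<gamma> (Suc n) =
     max (level_const C t0 \<gamma> n) (step_const C t0 (- real n - \<gamma>) (level_const C t0 \<gamma> n))"

definition uniform_const :: "real \<Rightarrow> real \<Rightarrow> real \<Rightarrow> real \<Rightarrow> real \<Rightarrow> real" where
  "uniform_const C t0 \<alpha>1 \<alpha>2 \<gamma> =
     (let A = level_const C t0 \<gamma> (nat \<lfloor>\<alpha>2 - \<alpha>1\<rfloor>)
      in max A (step_const C t0 (\<alpha>1 + 1 - \<alpha>2 - \<gamma>) (C * ((C + 1) * A))))"

lemma level_const_ge: "C \<le> level_const C t0 \<gamma> n"
  by (induction n) auto

lemma level_const_mono: "k \<le> n \<Longrightarrow> level_const C t0 \<gamma> k \<le> level_const C t0 \<gamma> n"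
  by (induction n) (auto simp: le_Suc_eq intro: order.trans)

lemma level_const_le_uniform_const:
  "level_const C t0 \<gamma> (nat \<lfloor>\<alpha>2 - \<alpha>1\<rfloor>) \<le> uniform_const C t0 \<alpha>1 \<alpha>2 \<gamma>"
  by (simp add: uniform_const_def Let_def)

lemma const_le_cube_mult:
  fixes C A :: real
  assumes "0 < C" "0 \<le> A"
  shows "C * A \<le> (C + 1) ^ 3 * A" and "C * (C * ((C + 1) * A)) \<le> (C + 1) ^ 3 * A"
proof -
  have "C \<le> (C + 1) ^ 3"
    using power_increasing[of 1 3 "C + 1"] assms by simp
  then show "C * A \<le> (C + 1) ^ 3 * A"
    using assms by (intro mult_right_mono) auto
  have "C * C \<le> (C + 1) * (C + 1)"
    using assms by (intro mult_mono) auto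
  then have "(C * C) * ((C + 1) * A) \<le> ((C + 1) * (C + 1)) * ((C + 1) * A)"
    using assms by (intro mult_right_mono) auto
  then show "C * (C * ((C + 1) * A)) \<le> (C + 1) ^ 3 * A"
    by (simp add: power3_eq_cube mult_ac)
qed

locale energy_hierarchy =
  fixes t0 \<alpha>1 \<alpha>2 \<gamma> C :: real and i :: int and D :: real
    and F :: "int \<Rightarrow> real \<Rightarrow> real \<Rightarrow> real"
  assumes t0_pos: "t0 > 0" and \<alpha>_gap: "\<alpha>1 \<le> \<alpha>2 - 1" and i_pos: "i \<ge> 1"
    and \<alpha>_gap_le_i: "\<alpha>2 - \<alpha>1 \<le> of_int i" and \<gamma>_nonneg: "\<gamma> \<ge> 0" and C_pos: "C > 0"
    and D_nonneg: "D \<ge> 0"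
    and nonneg: "\<forall>j \<in> {-1..i}. \<forall>\<alpha> \<in> {\<alpha>1 - 1..\<alpha>2}. \<forall>t \<ge> t0. F j \<alpha> t \<ge> 0"
    and mono_index: "\<forall>j1 \<in> {-1..i}. \<forall>j2 \<in> {-1..i}. \<forall>\<beta> \<in> {\<alpha>1..\<alpha>2}. \<forall>t \<ge> t0.
          j1 \<le> j2 \<longrightarrow> F j1 \<beta> t \<le> C * F j2 \<beta> t"
    and mono_weight: "\<forall>j \<in> {-1..i}. \<forall>\<beta>1 \<in> {\<alpha>1..\<alpha>2}. \<forall>\<beta>2 \<in> {\<alpha>1..\<alpha>2}. \<forall>t \<ge> t0.
          \<beta>1 \<le> \<beta>2 \<longrightarrow> F j \<beta>1 t \<le> C * F j \<beta>2 t"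
    and interpolation: "\<forall>j \<in> {-1..i}. \<forall>\<alpha> \<in> {\<alpha>1..\<alpha>2}. \<forall>\<beta>1 \<in> {\<alpha>1..\<alpha>2}. \<forall>\<beta>2 \<in> {\<alpha>1..\<alpha>2}. \<forall>t \<ge> t0.
          \<beta>1 \<le> \<alpha> \<and> \<alpha> \<le> \<beta>2 \<and> \<beta>1 < \<beta>2 \<longrightarrow>
          F j \<alpha> t \<le> C * (F j \<beta>1 t powr ((\<beta>2 - \<alpha>) / (\<beta>2 - \<beta>1)))
                        * (F j \<beta>2 t powr ((\<alpha> - \<beta>1) / (\<beta>2 - \<beta>1)))"
    and energy: "\<forall>j \<in> {0..i}. \<forall>\<alpha> \<in> {\<alpha>1..\<alpha>2}. \<forall>t1 t2. t0 \<le> t1 \<and> t1 \<le> t2 \<longrightarrow>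
          ennreal (F j \<alpha> t2) + (\<integral>\<^sup>+ t\<in>{t1..t2}. ennreal (F (j - 1) (\<alpha> - 1) t) \<partial>lebesgue)
            \<le> ennreal (C * (F j \<alpha> t1 + D * t1 powr (\<alpha> - \<alpha>2 - \<gamma>)))"
    and decay: "\<gamma> > 0 \<longrightarrow> (\<forall>t \<ge> t0. F i \<alpha>2 t \<le> C * t powr (- \<gamma>) * (F i \<alpha>2 t0 + D))"
begin

abbreviation data :: real where
  "data \<equiv> F i \<alpha>2 t0 + D"

definition decay_bound :: "int \<Rightarrow> real \<Rightarrow> real \<Rightarrow> bool" where
  "decay_bound j \<beta> A \<longleftrightarrow> (\<forall>t \<ge> t0. F j \<beta> t \<le> A * t powr (\<beta> - \<alpha>2 - \<gamma>) * data)"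

lemma F_nonneg: "-1 \<le> j \<Longrightarrow> j \<le> i \<Longrightarrow> \<alpha>1 - 1 \<le> \<alpha> \<Longrightarrow> \<alpha> \<le> \<alpha>2 \<Longrightarrow> t0 \<le> t \<Longrightarrow> 0 \<le> F j \<alpha> t"
  using nonneg by auto

lemma D_le_data: "D \<le> data"
  using F_nonneg[of i \<alpha>2 t0] i_pos \<alpha>_gap by simp

lemma data_nonneg: "0 \<le> data"
  using D_le_data D_nonneg by linarith

lemma energy_at:
  assumes "0 \<le> j" "j \<le> i" "\<alpha>1 \<le> \<alpha>" "\<alpha> \<le> \<alpha>2" "t0 \<le> t1" "t1 \<le> t2"
  shows "ennreal (F j \<alpha> t2) + (\<integral>\<^sup>+ t\<in>{t1..t2}. ennreal (F (j - 1) (\<alpha> - 1) t) \<partial>lebesgue)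
           \<le> ennreal (C * (F j \<alpha> t1 + D * t1 powr (\<alpha> - \<alpha>2 - \<gamma>)))"
  using energy assms by auto

lemma energy_pointwise:
  assumes "0 \<le> j" "j \<le> i" "\<alpha>1 \<le> \<alpha>" "\<alpha> \<le> \<alpha>2" "t0 \<le> t1" "t1 \<le> t2"
  shows "F j \<alpha> t2 \<le> C * (F j \<alpha> t1 + D * t1 powr (\<alpha> - \<alpha>2 - \<gamma>))"
proof -
  have "ennreal (F j \<alpha> t2) \<le> ennreal (C * (F j \<alpha> t1 + D * t1 powr (\<alpha> - \<alpha>2 - \<gamma>)))"
    by (rule order.trans[OF _ energy_at[OF assms]]) simp
  with C_pos D_nonneg F_nonneg[of j \<alpha> t1] assms show ?thesis
    by simp
qed

lemma energy_integral:
  assumes "0 \<le> j" "j \<le> i" "\<alpha>1 \<le> \<alpha>" "\<alpha> \<le> \<alpha>2" "t0 \<le> t1" "t1 \<le> t2"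
  shows "(\<integral>\<^sup>+ t\<in>{t1..t2}. ennreal (F (j - 1) (\<alpha> - 1) t) \<partial>lebesgue)
           \<le> ennreal (C * (F j \<alpha> t1 + D * t1 powr (\<alpha> - \<alpha>2 - \<gamma>)))"
  by (rule order.trans[OF _ energy_at[OF assms]]) simp

lemma decay_bound_mono:
  assumes "decay_bound j \<beta> A" "A \<le> A'"
  shows "decay_bound j \<beta> A'"
  unfolding decay_bound_def
proof (intro allI impI)
  fix t assume "t0 \<le> t"
  then have "F j \<beta> t \<le> A * t powr (\<beta> - \<alpha>2 - \<gamma>) * data"
    using assms(1) by (simp add: decay_bound_def)
  also have "\<dots> \<le> A' * t powr (\<beta> - \<alpha>2 - \<gamma>) * data"
    using assms(2) data_nonneg by (intro mult_right_mono) auto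
  finally show "F j \<beta> t \<le> A' * t powr (\<beta> - \<alpha>2 - \<gamma>) * data" .
qed

lemma decay_bound_lower_index:
  assumes "decay_bound j \<beta> A" "-1 \<le> j'" "j' \<le> j" "j \<le> i" "\<alpha>1 \<le> \<beta>" "\<beta> \<le> \<alpha>2"
  shows "decay_bound j' \<beta> (C * A)"
  unfolding decay_bound_def
proof (intro allI impI)
  fix t assume t: "t0 \<le> t"
  have "F j' \<beta> t \<le> C * F j \<beta> t"
    using mono_index assms t by auto
  also have "\<dots> \<le> C * (A * t powr (\<beta> - \<alpha>2 - \<gamma>) * data)"
    using assms(1) t C_pos unfolding decay_bound_def by (intro mult_left_mono) auto
  finally show "F j' \<beta> t \<le> C * A * t powr (\<beta> - \<alpha>2 - \<gamma>) * data"
    by (simp add: mult.assoc)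
qed

lemma decay_bound_interpolate:
  assumes j: "-1 \<le> j" "j \<le> i"
    and \<beta>: "\<alpha>1 \<le> \<beta>1" "\<beta>1 \<le> \<alpha>" "\<alpha> \<le> \<beta>2" "\<beta>1 < \<beta>2" "\<beta>2 \<le> \<alpha>2"
    and A: "0 \<le> A" and bound1: "decay_bound j \<beta>1 A" and bound2: "decay_bound j \<beta>2 A"
  shows "decay_bound j \<alpha> (C * A)"
  unfolding decay_bound_def
proof (intro allI impI)
  fix t assume t: "t0 \<le> t"
  define \<theta>1 where "\<theta>1 = (\<beta>2 - \<alpha>) / (\<beta>2 - \<beta>1)"
  define \<theta>2 where "\<theta>2 = (\<alpha> - \<beta>1) / (\<beta>2 - \<beta>1)"
  have \<theta>_nonneg: "0 \<le> \<theta>1" "0 \<le> \<theta>2"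
    using \<beta> by (auto simp: \<theta>1_def \<theta>2_def)
  have \<theta>_sum: "\<theta>1 + \<theta>2 = 1"
    using \<beta> by (simp add: \<theta>1_def \<theta>2_def diff_divide_distrib[symmetric] add_divide_distrib[symmetric])
  have "F j \<alpha> t \<le> C * F j \<beta>1 t powr \<theta>1 * F j \<beta>2 t powr \<theta>2"
    using interpolation j \<beta> t \<alpha>_gap unfolding \<theta>1_def \<theta>2_def by auto
  also have "\<dots> \<le> C * ((A * data * t powr (\<beta>1 - (\<alpha>2 + \<gamma>))) powr \<theta>1
                   * (A * data * t powr (\<beta>2 - (\<alpha>2 + \<gamma>))) powr \<theta>2)"
    using bound1 bound2 t C_pos \<theta>_nonneg F_nonneg[of j \<beta>1 t] F_nonneg[of j \<beta>2 t] j \<beta> \<alpha>_gap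
    unfolding mult.assoc[symmetric]
    by (intro mult_mono mult_left_mono powr_mono2) (auto simp: decay_bound_def mult_ac diff_diff_eq)
  also have "\<dots> = C * (A * data * t powr ((\<beta>1 - (\<alpha>2 + \<gamma>)) * \<theta>1 + (\<beta>2 - (\<alpha>2 + \<gamma>)) * \<theta>2))"
    using A data_nonneg t t0_pos by (subst powr_geometric_mean_mult[OF _ _ \<theta>_sum]) auto
  also have "(\<beta>1 - (\<alpha>2 + \<gamma>)) * \<theta>1 + (\<beta>2 - (\<alpha>2 + \<gamma>)) * \<theta>2 = \<alpha> - \<alpha>2 - \<gamma>"
    using interpolation_exponent_eq[OF \<beta>(4)] by (simp add: \<theta>1_def \<theta>2_def)
  finally show "F j \<alpha> t \<le> C * A * t powr (\<alpha> - \<alpha>2 - \<gamma>) * data"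
    by (simp add: mult_ac)
qed

lemma decay_bound_top: "decay_bound i \<alpha>2 C"
  unfolding decay_bound_def
proof (intro allI impI)
  fix t assume t: "t0 \<le> t"
  show "F i \<alpha>2 t \<le> C * t powr (\<alpha>2 - \<alpha>2 - \<gamma>) * data"
  proof (cases "\<gamma> > 0")
    case True
    then show ?thesis
      using decay t by simp
  next
    case False
    then have "\<gamma> = 0"
      using \<gamma>_nonneg by simp
    then show ?thesis
      using energy_pointwise[of i \<alpha>2 t0 t] i_pos \<alpha>_gap t t0_pos by simp
  qed
qed

lemma F_lower_le_initial:
  assumes j: "1 \<le> j" "j \<le> i" and \<beta>: "\<alpha>1 \<le> \<beta> - 1" "\<beta> \<le> \<alpha>2" and \<tau>: "t0 \<le> \<tau>"
  shows "F (j - 1) (\<beta> - 1) \<tau> \<le> C * (C * C + t0 powr (\<beta> - 1 - \<alpha>2 - \<gamma>)) * data"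
proof -
  have "F (j - 1) (\<beta> - 1) t0 \<le> C * F i (\<beta> - 1) t0"
    using mono_index j \<beta> \<alpha>_gap by auto
  also have "\<dots> \<le> C * (C * F i \<alpha>2 t0)"
    using mono_weight j \<beta> C_pos by (intro mult_left_mono) auto
  also have "\<dots> \<le> C * C * data"
    using C_pos D_nonneg by (simp add: distrib_left mult.assoc)
  finally have initial: "F (j - 1) (\<beta> - 1) t0 \<le> C * C * data" .
  have "F (j - 1) (\<beta> - 1) \<tau> \<le> C * (F (j - 1) (\<beta> - 1) t0 + D * t0 powr (\<beta> - 1 - \<alpha>2 - \<gamma>))"
    using energy_pointwise[of "j - 1" "\<beta> - 1" t0 \<tau>] j \<beta> \<tau> by simp
  also have "\<dots> \<le> C * (C * C * data + data * t0 powr (\<beta> - 1 - \<alpha>2 - \<gamma>))"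
    using initial D_le_data C_pos by (intro mult_left_mono add_mono mult_right_mono) auto
  finally show ?thesis
    by (simp add: algebra_simps)
qed

lemma F_lower_small_somewhere:
  assumes j: "1 \<le> j" "j \<le> i" and \<beta>: "\<alpha>1 \<le> \<beta> - 1" "\<beta> \<le> \<alpha>2"
    and A: "0 \<le> A" "decay_bound j \<beta> A" and t: "t0 \<le> t" "0 < t" and data_pos: "0 < data"
  shows "\<exists>s \<in> {t..2 * t}. F (j - 1) (\<beta> - 1) s \<le> 2 * C * (A + 1) * t powr (\<beta> - 1 - \<alpha>2 - \<gamma>) * data"
proof -
  define M where "M = C * (A + 1) * t powr (\<beta> - \<alpha>2 - \<gamma>) * data"
  have "F j \<beta> t \<le> A * t powr (\<beta> - \<alpha>2 - \<gamma>) * data"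
    using A t by (auto simp: decay_bound_def)
  moreover have "D * t powr (\<beta> - \<alpha>2 - \<gamma>) \<le> data * t powr (\<beta> - \<alpha>2 - \<gamma>)"
    using D_le_data by (simp add: mult_right_mono)
  ultimately have "F j \<beta> t + D * t powr (\<beta> - \<alpha>2 - \<gamma>) \<le> (A + 1) * t powr (\<beta> - \<alpha>2 - \<gamma>) * data"
    by (simp add: algebra_simps)
  then have "C * (F j \<beta> t + D * t powr (\<beta> - \<alpha>2 - \<gamma>)) \<le> M"
    using C_pos unfolding M_def by (simp add: mult.assoc mult_left_mono)
  then have "(\<integral>\<^sup>+ s\<in>{t..2 * t}. ennreal (F (j - 1) (\<beta> - 1) s) \<partial>lebesgue) \<le> ennreal M"
    using energy_integral[of j \<beta> t "2 * t"] j \<beta> t \<alpha>_gap by (auto intro: order.trans ennreal_leI)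
  moreover have "0 < M"
    using C_pos A t data_pos by (simp add: M_def)
  moreover have "t powr (\<beta> - 1 - \<alpha>2 - \<gamma>) = t powr (\<beta> - \<alpha>2 - \<gamma>) / t"
    using t powr_diff[of t "\<beta> - \<alpha>2 - \<gamma>" 1] by (simp add: algebra_simps)
  then have "2 * M / (2 * t - t) = 2 * C * (A + 1) * t powr (\<beta> - 1 - \<alpha>2 - \<gamma>) * data"
    by (simp add: M_def)
  ultimately show ?thesis
    using nn_integral_le_imp_le_twice_average[of t "2 * t" M "F (j - 1) (\<beta> - 1)"] t by simp
qed

lemma F_lower_le_by_averaging:
  assumes j: "1 \<le> j" "j \<le> i" and \<beta>: "\<alpha>1 \<le> \<beta> - 1" "\<beta> \<le> \<alpha>2"
    and A: "0 \<le> A" "decay_bound j \<beta> A" and \<tau>: "2 * t0 \<le> \<tau>" and data_pos: "0 < data"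
  shows "F (j - 1) (\<beta> - 1) \<tau>
           \<le> C * (2 * C * (A + 1) + 1) * 2 powr (1 - (\<beta> - \<alpha>2 - \<gamma>))
             * \<tau> powr (\<beta> - 1 - \<alpha>2 - \<gamma>) * data"
proof -
  define p where "p = \<beta> - 1 - \<alpha>2 - \<gamma>"
  define t where "t = \<tau> / 2"
  have t: "t0 \<le> t" "0 < t" "2 * t = \<tau>"
    using \<tau> t0_pos by (auto simp: t_def)
  then obtain s where s: "s \<in> {t..\<tau>}" and small: "F (j - 1) (\<beta> - 1) s \<le> 2 * C * (A + 1) * t powr p * data"
    using F_lower_small_somewhere[OF j \<beta> A t(1,2) data_pos] by (auto simp: p_def)
  have "s powr p \<le> t powr p"
    using s t \<beta> \<gamma>_nonneg by (intro powr_mono2') (auto simp: p_def)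
  then have "D * s powr p \<le> data * t powr p"
    using D_le_data D_nonneg by (intro mult_mono) auto
  moreover have "F (j - 1) (\<beta> - 1) \<tau> \<le> C * (F (j - 1) (\<beta> - 1) s + D * s powr p)"
    using energy_pointwise[of "j - 1" "\<beta> - 1" s \<tau>] j \<beta> s t by (simp add: p_def)
  ultimately have "F (j - 1) (\<beta> - 1) \<tau> \<le> C * (2 * C * (A + 1) * t powr p * data + data * t powr p)"
    using small C_pos by (smt (verit) mult_left_mono)
  also have "\<dots> = C * (2 * C * (A + 1) + 1) * t powr p * data"
    by (simp add: algebra_simps)
  also have "t powr p = 2 powr (1 - (\<beta> - \<alpha>2 - \<gamma>)) * \<tau> powr p"
    using t by (simp add: t_def divide_powr_eq p_def algebra_simps)
  finally show ?thesis
    by (simp add: p_def mult_ac)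
qed

lemma F_lower_le_early:
  assumes j: "1 \<le> j" "j \<le> i" and \<beta>: "\<alpha>1 \<le> \<beta> - 1" "\<beta> \<le> \<alpha>2" and \<tau>: "t0 \<le> \<tau>"
    and early: "\<tau> \<le> 2 * t0 \<or> data = 0"
  shows "F (j - 1) (\<beta> - 1) \<tau>
           \<le> C * (C * C + t0 powr (\<beta> - 1 - \<alpha>2 - \<gamma>)) * (2 * t0) powr (1 - (\<beta> - \<alpha>2 - \<gamma>))
             * \<tau> powr (\<beta> - 1 - \<alpha>2 - \<gamma>) * data"
proof -
  define p where "p = \<beta> - 1 - \<alpha>2 - \<gamma>"
  define c where "c = C * (C * C + t0 powr p) * data"
  have "c \<le> c * (\<tau> / (2 * t0)) powr p"
  proof (cases "data = 0")
    case False
    with early have "1 \<le> (\<tau> / (2 * t0)) powr p"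
      using powr_mono2'[of p "\<tau> / (2 * t0)" 1] \<tau> t0_pos \<beta> \<gamma>_nonneg by (simp add: p_def)
    moreover have "0 \<le> c"
      using C_pos data_nonneg by (simp add: c_def)
    ultimately show ?thesis
      using mult_left_mono[of 1 _ c] by simp
  qed (simp add: c_def)
  also have "(\<tau> / (2 * t0)) powr p = (2 * t0) powr (1 - (\<beta> - \<alpha>2 - \<gamma>)) * \<tau> powr p"
    using \<tau> t0_pos by (simp add: divide_powr_eq p_def algebra_simps)
  finally show ?thesis
    using F_lower_le_initial[OF j \<beta> \<tau>] by (simp add: c_def p_def mult_ac)
qed

lemma decay_bound_step:
  assumes j: "1 \<le> j" "j \<le> i" and \<beta>: "\<alpha>1 \<le> \<beta> - 1" "\<beta> \<le> \<alpha>2"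
    and A: "0 \<le> A" "decay_bound j \<beta> A"
  shows "decay_bound (j - 1) (\<beta> - 1) (step_const C t0 (\<beta> - \<alpha>2 - \<gamma>) A)"
  unfolding decay_bound_def
proof (intro allI impI)
  fix \<tau> assume \<tau>: "t0 \<le> \<tau>"
  define p where "p = \<beta> - 1 - \<alpha>2 - \<gamma>"
  define T1 where "T1 = C * (2 * C * (A + 1) + 1) * 2 powr (1 - (\<beta> - \<alpha>2 - \<gamma>))"
  define T2 where "T2 = C * (C * C + t0 powr p) * (2 * t0) powr (1 - (\<beta> - \<alpha>2 - \<gamma>))"
  have T_nonneg: "0 \<le> T1" "0 \<le> T2"
    using C_pos A by (simp_all add: T1_def T2_def)
  \<comment> \<open>For data = 0 averaging is unavailable, but then the early-time bound is already 0.\<close>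
  have "F (j - 1) (\<beta> - 1) \<tau> \<le> T1 * \<tau> powr p * data
      \<or> F (j - 1) (\<beta> - 1) \<tau> \<le> T2 * \<tau> powr p * data"
    using F_lower_le_early[OF j \<beta> \<tau>] F_lower_le_by_averaging[OF j \<beta> A, of \<tau>] data_nonneg
    unfolding T1_def T2_def p_def by (cases "\<tau> \<le> 2 * t0 \<or> data = 0") auto
  then have "F (j - 1) (\<beta> - 1) \<tau> \<le> (T1 + T2) * \<tau> powr p * data"
    using T_nonneg data_nonneg by (auto simp: distrib_right intro: order.trans add_increasing add_increasing2)
  also have "T1 + T2 = step_const C t0 (\<beta> - \<alpha>2 - \<gamma>) A"
    by (simp add: step_const_def T1_def T2_def p_def algebra_simps)
  finally show "F (j - 1) (\<beta> - 1) \<tau>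
      \<le> step_const C t0 (\<beta> - \<alpha>2 - \<gamma>) A * \<tau> powr (\<beta> - 1 - \<alpha>2 - \<gamma>) * data"
    by (simp add: p_def)
qed

abbreviation n_levels :: nat where
  "n_levels \<equiv> nat \<lfloor>\<alpha>2 - \<alpha>1\<rfloor>"

abbreviation uniform :: real where
  "uniform \<equiv> uniform_const C t0 \<alpha>1 \<alpha>2 \<gamma>"

lemma n_levels_bounds:
  "1 \<le> n_levels" "real n_levels \<le> \<alpha>2 - \<alpha>1" "\<alpha>2 - \<alpha>1 < real n_levels + 1" "int n_levels \<le> i"
proof -
  have floor_pos: "1 \<le> \<lfloor>\<alpha>2 - \<alpha>1\<rfloor>"
    using \<alpha>_gap by (simp add: le_floor_iff)
  then show "1 \<le> n_levels"
    by linarith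
  have "real n_levels = of_int \<lfloor>\<alpha>2 - \<alpha>1\<rfloor>"
    using floor_pos by simp
  then show "real n_levels \<le> \<alpha>2 - \<alpha>1" "\<alpha>2 - \<alpha>1 < real n_levels + 1"
    by linarith+
  then show "int n_levels \<le> i"
    using \<alpha>_gap_le_i by linarith
qed

lemma level_const_nonneg: "0 \<le> level_const C t0 \<gamma> n"
  using level_const_ge[of C t0 \<gamma> n] C_pos by linarith

lemma uniform_nonneg: "0 \<le> uniform"
  using level_const_nonneg level_const_le_uniform_const order.trans by blast

lemma decay_bound_level:
  "n \<le> n_levels \<Longrightarrow> decay_bound (i - int n) (\<alpha>2 - real n) (level_const C t0 \<gamma> n)"
proof (induction n)
  case 0
  then show ?case
    using decay_bound_top by simp
next
  case (Suc n)
  then have "decay_bound (i - int n - 1) (\<alpha>2 - real n - 1)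
      (step_const C t0 (- real n - \<gamma>) (level_const C t0 \<gamma> n))"
    using decay_bound_step[OF _ _ _ _ level_const_nonneg, of "i - int n" "\<alpha>2 - real n"] n_levels_bounds
    by auto
  then show ?case
    by (auto simp: algebra_simps intro: decay_bound_mono)
qed

lemma decay_bound_level_uniform:
  assumes "n \<le> n_levels"
  shows "decay_bound (i - int n) (\<alpha>2 - real n) uniform"
proof -
  have "level_const C t0 \<gamma> n \<le> uniform"
    using level_const_mono[OF assms] level_const_le_uniform_const by (rule order.trans)
  with decay_bound_level[OF assms] show ?thesis
    by (rule decay_bound_mono)
qed

lemma decay_bound_bottom:
  assumes below: "\<alpha>1 < \<alpha>2 - real n_levels"
  shows "decay_bound (i - int n_levels - 1) \<alpha>1 uniform"
proof -
  define A where "A = level_const C t0 \<gamma> n_levels"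
  have A: "0 \<le> A" "C * A \<le> (C + 1) * A" "A \<le> (C + 1) * A"
    using level_const_nonneg C_pos by (auto simp: A_def algebra_simps)
  have K: "1 \<le> n_levels" "1 \<le> real n_levels" "real n_levels \<le> \<alpha>2 - \<alpha>1"
      "\<alpha>2 - \<alpha>1 < real n_levels + 1" "int n_levels < i"
    using n_levels_bounds below \<alpha>_gap_le_i by linarith+
  have "decay_bound (i - int (n_levels - 1)) (\<alpha>2 - real (n_levels - 1)) A"
    using decay_bound_level[of "n_levels - 1"] level_const_mono[of "n_levels - 1" n_levels]
    by (auto simp: A_def intro: decay_bound_mono)
  then have "decay_bound (i - int n_levels + 1) (\<alpha>2 - real n_levels + 1) A"
    using K by (simp add: of_nat_diff algebra_simps)
  then have "decay_bound (i - int n_levels) (\<alpha>2 - real n_levels + 1) (C * A)"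
    by (elim decay_bound_lower_index) (use K \<alpha>_gap in linarith)+
  then have upper: "decay_bound (i - int n_levels) (\<alpha>2 - real n_levels + 1) ((C + 1) * A)"
    using A(2) by (rule decay_bound_mono)
  have lower: "decay_bound (i - int n_levels) (\<alpha>2 - real n_levels) ((C + 1) * A)"
    using decay_bound_level[of n_levels] A by (auto simp: A_def intro: decay_bound_mono)
  have "decay_bound (i - int n_levels) (\<alpha>1 + 1) (C * ((C + 1) * A))"
    by (rule decay_bound_interpolate[OF _ _ _ _ _ _ _ _ lower upper]) (use K A in linarith)+
  then have "decay_bound (i - int n_levels - 1) (\<alpha>1 + 1 - 1)
      (step_const C t0 (\<alpha>1 + 1 - \<alpha>2 - \<gamma>) (C * ((C + 1) * A)))"
    using K A C_pos \<alpha>_gap by (intro decay_bound_step) auto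
  then show ?thesis
    by (auto simp: uniform_const_def A_def Let_def intro: decay_bound_mono)
qed

lemma decay_bound_below_level:
  assumes k: "k \<le> n_levels" "\<alpha>1 < \<alpha>2 - real k"
  shows "decay_bound (i - int k - 1) (max \<alpha>1 (\<alpha>2 - real k - 1)) uniform"
proof (cases "k < n_levels")
  case True
  then have "max \<alpha>1 (\<alpha>2 - real k - 1) = \<alpha>2 - real (Suc k)"
    using n_levels_bounds by auto
  with decay_bound_level_uniform[of "Suc k"] True show ?thesis
    by (simp add: algebra_simps)
next
  case False
  with k have "k = n_levels"
    by simp
  moreover from this have "max \<alpha>1 (\<alpha>2 - real k - 1) = \<alpha>1"
    using n_levels_bounds(3) by simp
  ultimately show ?thesis
    using decay_bound_bottom k by simp
qed

lemma decay_bound_between_levels: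
  assumes k: "k \<le> n_levels" "int k + 1 \<le> i"
    and \<alpha>: "\<alpha>1 \<le> \<alpha>" "\<alpha>2 - real k - 1 < \<alpha>" "\<alpha> < \<alpha>2 - real k"
  shows "decay_bound (i - int k - 1) \<alpha> (C * ((C + 1) * uniform))"
proof -
  define \<beta> where "\<beta> = max \<alpha>1 (\<alpha>2 - real k - 1)"
  have \<beta>: "\<alpha>1 \<le> \<beta>" "\<beta> \<le> \<alpha>" "\<beta> < \<alpha>2 - real k"
    using \<alpha> by (auto simp: \<beta>_def)
  have const: "C * uniform \<le> (C + 1) * uniform" "uniform \<le> (C + 1) * uniform"
    using uniform_nonneg C_pos by (auto simp: algebra_simps)
  have "decay_bound (i - int k - 1) \<beta> uniform"
    using decay_bound_below_level k \<beta> unfolding \<beta>_def by auto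
  then have lower: "decay_bound (i - int k - 1) \<beta> ((C + 1) * uniform)"
    using const(2) by (rule decay_bound_mono)
  from decay_bound_level_uniform[OF k(1)]
  have "decay_bound (i - int k - 1) (\<alpha>2 - real k) (C * uniform)"
    using k \<beta> by (elim decay_bound_lower_index) auto
  then have upper: "decay_bound (i - int k - 1) (\<alpha>2 - real k) ((C + 1) * uniform)"
    using const(1) by (rule decay_bound_mono)
  show ?thesis
    by (rule decay_bound_interpolate[OF _ _ _ _ _ _ _ _ lower upper])
      (use k \<beta> \<alpha> uniform_nonneg C_pos in auto)
qed

lemma decay_bound_all:
  assumes j: "0 \<le> j" "j \<le> i" and \<alpha>: "max \<alpha>1 (\<alpha>2 - of_int j) \<le> \<alpha>" "\<alpha> \<le> \<alpha>2"
  shows "decay_bound (i - j) \<alpha> ((C + 1) ^ 3 * uniform)"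
proof -
  define k where "k = nat \<lfloor>\<alpha>2 - \<alpha>\<rfloor>"
  have "real k = of_int \<lfloor>\<alpha>2 - \<alpha>\<rfloor>"
    using \<alpha> by (simp add: k_def)
  then have k: "real k \<le> \<alpha>2 - \<alpha>" "\<alpha>2 - \<alpha> < real k + 1"
    by linarith+
  have k_range: "k \<le> n_levels" "int k \<le> j" "\<alpha>1 \<le> \<alpha>2 - real k"
    using \<alpha> k by (auto simp: k_def nat_mono floor_mono)
  consider "\<alpha> = \<alpha>2 - real k" | "\<alpha> < \<alpha>2 - real k"
    using k by linarith
  then show ?thesis
  proof cases
    case 1
    from decay_bound_level_uniform[OF k_range(1)] have "decay_bound (i - j) \<alpha> (C * uniform)"
      unfolding 1 using k_range j by (elim decay_bound_lower_index) auto
    then show ?thesis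
      using const_le_cube_mult(1)[OF C_pos uniform_nonneg] by (rule decay_bound_mono)
  next
    case 2
    then have "int k + 1 \<le> j"
      using \<alpha> by linarith
    then have "decay_bound (i - int k - 1) \<alpha> (C * ((C + 1) * uniform))"
      using decay_bound_between_levels k k_range j \<alpha> 2 by auto
    then have "decay_bound (i - j) \<alpha> (C * (C * ((C + 1) * uniform)))"
      using \<open>int k + 1 \<le> j\<close> j \<alpha> by (elim decay_bound_lower_index) auto
    then show ?thesis
      using const_le_cube_mult(2)[OF C_pos uniform_nonneg] by (rule decay_bound_mono)
  qed
qed

lemma decay_estimate:
  "\<forall>j \<in> {0..i}. \<forall>\<alpha> \<in> {max \<alpha>1 (\<alpha>2 - of_int j)..\<alpha>2}. \<forall>t \<ge> t0.
     F (i - j) \<alpha> t \<le> (C + 1) ^ 3 * uniform * t powr (\<alpha> - \<alpha>2 - \<gamma>) * (F i \<alpha>2 t0 + D)"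
  using decay_bound_all by (auto simp: decay_bound_def)

end

theorem lemma5p2:
  fixes t0 \<alpha>1 \<alpha>2 \<gamma> C :: real and i :: int
  assumes "t0 > 0" and "\<alpha>1 \<le> \<alpha>2 - 1" and "i \<ge> 1" and "\<alpha>2 - \<alpha>1 \<le> of_int i"
      and "\<gamma> \<ge> 0" and "C > 0"
  shows "\<exists>C'. \<forall>(D::real) (F :: int \<Rightarrow> real \<Rightarrow> real \<Rightarrow> real).
    ( D \<ge> 0
    \<and> (\<forall>j \<in> {-1..i}. \<forall>\<alpha> \<in> {\<alpha>1 - 1..\<alpha>2}. \<forall>t \<ge> t0. F j \<alpha> t \<ge> 0)
    \<and> (\<forall>j \<in> {-1..i}. \<forall>\<alpha> \<in> {\<alpha>1 - 1..\<alpha>2}.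
          set_borel_measurable lebesgue {t0..} (F j \<alpha>))
    \<and> (\<forall>j1 \<in> {-1..i}. \<forall>j2 \<in> {-1..i}. \<forall>\<beta> \<in> {\<alpha>1..\<alpha>2}. \<forall>t \<ge> t0.
          j1 \<le> j2 \<longrightarrow> F j1 \<beta> t \<le> C * F j2 \<beta> t)
    \<and> (\<forall>j \<in> {-1..i}. \<forall>\<beta>1 \<in> {\<alpha>1..\<alpha>2}. \<forall>\<beta>2 \<in> {\<alpha>1..\<alpha>2}. \<forall>t \<ge> t0.
          \<beta>1 \<le> \<beta>2 \<longrightarrow> F j \<beta>1 t \<le> C * F j \<beta>2 t)
    \<and> (\<forall>j \<in> {-1..i}. \<forall>\<alpha> \<in> {\<alpha>1..\<alpha>2}. \<forall>\<beta>1 \<in> {\<alpha>1..\<alpha>2}. \<forall>\<beta>2 \<in> {\<alpha>1..\<alpha>2}. \<forall>t \<ge> t0.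
          \<beta>1 \<le> \<alpha> \<and> \<alpha> \<le> \<beta>2 \<and> \<beta>1 < \<beta>2 \<longrightarrow>
          F j \<alpha> t \<le> C * (F j \<beta>1 t powr ((\<beta>2 - \<alpha>) / (\<beta>2 - \<beta>1)))
                        * (F j \<beta>2 t powr ((\<alpha> - \<beta>1) / (\<beta>2 - \<beta>1))))
    \<and> (\<forall>j \<in> {0..i}. \<forall>\<alpha> \<in> {\<alpha>1..\<alpha>2}. \<forall>t1 t2. t0 \<le> t1 \<and> t1 \<le> t2 \<longrightarrow>
          ennreal (F j \<alpha> t2) + (\<integral>\<^sup>+ t\<in>{t1..t2}. ennreal (F (j - 1) (\<alpha> - 1) t) \<partial>lebesgue)
            \<le> ennreal (C * (F j \<alpha> t1 + D * t1 powr (\<alpha> - \<alpha>2 - \<gamma>))))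
    \<and> (\<gamma> > 0 \<longrightarrow> (\<forall>t \<ge> t0. F i \<alpha>2 t \<le> C * t powr (- \<gamma>) * (F i \<alpha>2 t0 + D))) )
    \<longrightarrow> (\<forall>j \<in> {0..i}. \<forall>\<alpha> \<in> {max \<alpha>1 (\<alpha>2 - of_int j)..\<alpha>2}. \<forall>t \<ge> t0.
          F (i - j) \<alpha> t \<le> C' * t powr (\<alpha> - \<alpha>2 - \<gamma>) * (F i \<alpha>2 t0 + D))"
  using assms
  by (intro exI[of _ "(C + 1) ^ 3 * uniform_const C t0 \<alpha>1 \<alpha>2 \<gamma>"] allI impI
      energy_hierarchy.decay_estimate) (simp add: energy_hierarchy_def)

end
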